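(* Let $k$ be a field of characteristic different from $2$ containing an element $i$ with $i^2=-1$, and let $k(u,v)$ be the rational function field in two variables. Then in the Brauer group $\mathrm{Br}(k(u,v))$ one has the equality of quaternion classes $$\big(uv(u^2-1)(v^2-1),\; u(v^2-1)(v^2-u^2)\big) = (u,v).$$ Equivalently, the conics in $\mathbf{P}^2_{k(u,v)}$ given in homogeneous coordinates $S,T,R$ by $$v(v^2-1)S^2 - u(u^2-1)T^2 + uv(u^2-v^2)R^2 = 0 \quad\text{and}\quad S^2 - uT^2 - vR^2 = 0$$ are isomorphic over $k(u,v)$.
   Context: For a field $F$ of characteristic $\neq 2$ and $a,b\in F^\times$, $(a,b)\in\mathrm{Br}(F)$ denotes the class of the quaternion algebra with generators $x,y$ and relations $x^2=a$, $y^2=b$, $xy=-yx$. *)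

theory Defs
  imports "HOL-Computational_Algebra.Polynomial" "HOL-Computational_Algebra.Fraction_Field"
begin

text \<open>The quaternion algebra (a,b) over a field F, realised concretely on F^4 with
  basis 1, x, y, xy and relations x^2 = a, y^2 = b, xy = -yx.\<close>

type_synonym 'a quat = "'a \<times> 'a \<times> 'a \<times> 'a"

definition quat_add :: "'a::field quat \<Rightarrow> 'a quat \<Rightarrow> 'a quat" where
  "quat_add p q = (case p of (p0,p1,p2,p3) \<Rightarrow> case q of (q0,q1,q2,q3) \<Rightarrow>
     (p0+q0, p1+q1, p2+q2, p3+q3))"

definition quat_scale :: "'a::field \<Rightarrow> 'a quat \<Rightarrow> 'a quat" where
  "quat_scale s p = (case p of (p0,p1,p2,p3) \<Rightarrow> (s*p0, s*p1, s*p2, s*p3))"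

definition quat_mult :: "'a::field \<Rightarrow> 'a \<Rightarrow> 'a quat \<Rightarrow> 'a quat \<Rightarrow> 'a quat" where
  "quat_mult a b p q = (case p of (p0,p1,p2,p3) \<Rightarrow> case q of (q0,q1,q2,q3) \<Rightarrow>
     (p0*q0 + a*p1*q1 + b*p2*q2 - a*b*p3*q3,
      p0*q1 + p1*q0 - b*p2*q3 + b*p3*q2,
      p0*q2 + p2*q0 + a*p1*q3 - a*p3*q1,
      p0*q3 + p3*q0 + p1*q2 - p2*q1))"

text \<open>Two quaternion algebras
  (central simple of the same degree 2) have the same Brauer class iff they are
  isomorphic as F-algebras; we state it as existence of an F-algebra isomorphism.\<close>

definition quat_brauer_eq :: "'a::field \<Rightarrow> 'a \<Rightarrow> 'a \<Rightarrow> 'a \<Rightarrow> bool" where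
  "quat_brauer_eq a b c d \<longleftrightarrow>
     (\<exists>f :: 'a quat \<Rightarrow> 'a quat. bij f \<and>
        (\<forall>p q. f (quat_add p q) = quat_add (f p) (f q)) \<and>
        (\<forall>s p. f (quat_scale s p) = quat_scale s (f p)) \<and>
        (\<forall>p q. f (quat_mult a b p q) = quat_mult c d (f p) (f q)) \<and>
        f (1,0,0,0) = (1,0,0,0))"

text \<open>The rational function field k(u,v) as the fraction field of k[u][v].\<close>

definition var_u :: "'k::field poly poly fract" where
  "var_u = Fract [:[:0, 1:]:] 1"

definition var_v :: "'k::field poly poly fract" where
  "var_v = Fract [:0, 1:] 1"

end

theory Submission
  imports Defs
begin

text \<open>If X and Y are anticommuting pure quaternions of (c,d) with X^2 = a \<noteq> 0 and
  Y^2 = b \<noteq> 0, then 1, X, Y, XY is a basis on which the multiplication is that of (a,b),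
  so (a,b) and (c,d) are isomorphic. For pure quaternions, anticommuting means orthogonal for
  the polar form of the reduced norm. Once a square root j of -1 is available, such X and Y
  with X^2 = uv(u^2-1)(v^2-1) and Y^2 = u(v^2-1)(v^2-u^2) in (u,v) can be written down
  explicitly; in k(u,v) these squares are nonzero.\<close>

text \<open>In (c,d) the product of the pure quaternions (0,x) and (0,y) is
  (pure_form c d x y, pure_cross c d x y).\<close>

fun pure_form :: "'a::field \<Rightarrow> 'a \<Rightarrow> 'a \<times> 'a \<times> 'a \<Rightarrow> 'a \<times> 'a \<times> 'a \<Rightarrow> 'a" where
  "pure_form c d (x1, x2, x3) (y1, y2, y3) = c*x1*y1 + d*x2*y2 - c*d*x3*y3"

fun pure_cross :: "'a::field \<Rightarrow> 'a \<Rightarrow> 'a \<times> 'a \<times> 'a \<Rightarrow> 'a \<times> 'a \<times> 'a \<Rightarrow> 'a \<times> 'a \<times> 'a" where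
  "pure_cross c d (x1, x2, x3) (y1, y2, y3) = (d*(x3*y2 - x2*y3), c*(x1*y3 - x3*y1), x1*y2 - x2*y1)"

lemma pure_form_commute: "pure_form c d x y = pure_form c d y x"
  by (cases x rule: prod_cases3; cases y rule: prod_cases3) (simp add: algebra_simps)

lemma pure_form_cross_left: "pure_form c d x (pure_cross c d x y) = 0"
  by (cases x rule: prod_cases3; cases y rule: prod_cases3) (simp add: algebra_simps)

lemma pure_form_cross_right: "pure_form c d y (pure_cross c d x y) = 0"
  by (cases x rule: prod_cases3; cases y rule: prod_cases3) (simp add: algebra_simps)

lemma pure_form_cross_cross:
  "pure_form c d (pure_cross c d x y) (pure_cross c d x y) =
    (pure_form c d x y)^2 - pure_form c d x x * pure_form c d y y"
  by (cases x rule: prod_cases3; cases y rule: prod_cases3) (simp add: algebra_simps power2_eq_square)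

fun quat_frame_map :: "'a::field \<times> 'a \<times> 'a \<Rightarrow> 'a \<times> 'a \<times> 'a \<Rightarrow> 'a \<times> 'a \<times> 'a \<Rightarrow> 'a quat \<Rightarrow> 'a quat" where
  "quat_frame_map (x1, x2, x3) (y1, y2, y3) (z1, z2, z3) (p0, p1, p2, p3) =
     (p0, p1*x1 + p2*y1 + p3*z1, p1*x2 + p2*y2 + p3*z2, p1*x3 + p2*y3 + p3*z3)"

lemma quat_frame_map_add:
  "quat_frame_map x y z (quat_add p q) = quat_add (quat_frame_map x y z p) (quat_frame_map x y z q)"
  by (cases x rule: prod_cases3, cases y rule: prod_cases3, cases z rule: prod_cases3,
      cases p rule: prod_cases4, cases q rule: prod_cases4) (simp add: quat_add_def algebra_simps)

lemma quat_frame_map_scale: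
  "quat_frame_map x y z (quat_scale s p) = quat_scale s (quat_frame_map x y z p)"
  by (cases x rule: prod_cases3, cases y rule: prod_cases3, cases z rule: prod_cases3,
      cases p rule: prod_cases4) (simp add: quat_scale_def algebra_simps)

lemma quat_frame_map_scalar: "quat_frame_map x y z (s, 0, 0, 0) = (s, 0, 0, 0)"
  by (cases x rule: prod_cases3, cases y rule: prod_cases3, cases z rule: prod_cases3) simp

lemma fst_quat_frame_map: "fst (quat_frame_map x y z p) = fst p"
  by (cases x rule: prod_cases3, cases y rule: prod_cases3, cases z rule: prod_cases3,
      cases p rule: prod_cases4) simp

lemma pure_form_quat_frame_map:
  "pure_form c d (snd (quat_frame_map x y z (p0, p1, p2, p3))) w =
     p1 * pure_form c d x w + p2 * pure_form c d y w + p3 * pure_form c d z w"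
  by (cases x rule: prod_cases3, cases y rule: prod_cases3, cases z rule: prod_cases3,
      cases w rule: prod_cases3) (simp add: algebra_simps)

lemma quat_frame_map_mult:
  assumes "pure_form c d x y = 0"
  defines "f \<equiv> quat_frame_map x y (pure_cross c d x y)"
  shows "f (quat_mult (pure_form c d x x) (pure_form c d y y) p q) = quat_mult c d (f p) (f q)"
proof -
  obtain x1 x2 x3 y1 y2 y3 p0 p1 p2 p3 q0 q1 q2 q3
    where xypq: "x = (x1, x2, x3)" "y = (y1, y2, y3)" "p = (p0, p1, p2, p3)" "q = (q0, q1, q2, q3)"
    by (metis prod_cases3 prod_cases4)
  from assms(1) show ?thesis
    unfolding f_def xypq
    by (simp only: quat_mult_def quat_frame_map.simps pure_form.simps pure_cross.simps prod.case
        prod.inject) (intro conjI; algebra)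
qed

lemma quat_frame_map_expansion:
  assumes "pure_form c d x y = 0"
  defines "a \<equiv> pure_form c d x x" and "b \<equiv> pure_form c d y y" and "z \<equiv> pure_cross c d x y"
  shows "quat_frame_map x y z (0, b * pure_form c d w x, a * pure_form c d w y, - pure_form c d w z) =
    quat_scale (a * b) (0, w)"
proof -
  obtain x1 x2 x3 y1 y2 y3 w1 w2 w3
    where xyw: "x = (x1, x2, x3)" "y = (y1, y2, y3)" "w = (w1, w2, w3)"
    by (metis prod_cases3)
  from assms(1) show ?thesis
    unfolding a_def b_def z_def xyw
    by (simp only: quat_scale_def quat_frame_map.simps pure_form.simps pure_cross.simps prod.case
        prod.inject mult_zero_right simp_thms) (intro conjI; algebra)
qed

lemma bij_quat_frame_map:
  assumes orth: "pure_form c d x y = 0"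
    and a: "pure_form c d x x \<noteq> 0" and b: "pure_form c d y y \<noteq> 0"
  shows "bij (quat_frame_map x y (pure_cross c d x y))"
proof -
  define z where "z = pure_cross c d x y"
  let ?a = "pure_form c d x x" and ?b = "pure_form c d y y" and ?f = "quat_frame_map x y z"
  \<comment> \<open>coordinates in the orthogonal basis x, y, z, whose squared norms are a, b, -ab\<close>
  define g :: "'a quat \<Rightarrow> 'a quat" where "g w = (fst w, pure_form c d (snd w) x / ?a,
    pure_form c d (snd w) y / ?b, - pure_form c d (snd w) z / (?a * ?b))" for w
  have yx: "pure_form c d y x = 0" and zx: "pure_form c d z x = 0" and zy: "pure_form c d z y = 0"
    using orth pure_form_cross_left[of c d x y] pure_form_cross_right[of c d y x]
    by (simp_all add: z_def pure_form_commute)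
  have zz: "pure_form c d z z = - (?a * ?b)"
    using orth by (simp add: z_def pure_form_cross_cross)
  have "g (?f p) = p" for p
  proof (cases p rule: prod_cases4)
    case (fields p0 p1 p2 p3)
    then show ?thesis
      using a b unfolding g_def
      by (simp add: fst_quat_frame_map pure_form_quat_frame_map orth yx zx zy zz
          pure_form_commute[of c d x z] pure_form_commute[of c d y z])
  qed
  moreover have "?f (g w) = w" for w
  proof -
    obtain w0 v where Pair: "w = (w0, v)" by (rule prod.exhaust)
    have "g w = quat_add (w0, 0, 0, 0) (quat_scale (inverse (?a * ?b))
        (0, ?b * pure_form c d v x, ?a * pure_form c d v y, - pure_form c d v z))"
      using a b by (simp add: Pair g_def quat_add_def quat_scale_def field_simps)
    then have "?f (g w) =
        quat_add (w0, 0, 0, 0) (quat_scale (inverse (?a * ?b)) (quat_scale (?a * ?b) (0, v)))"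
      using quat_frame_map_expansion[OF orth, of v]
      by (simp add: quat_frame_map_add quat_frame_map_scale quat_frame_map_scalar z_def)
    also have "\<dots> = w"
      using a b by (cases v rule: prod_cases3) (simp add: Pair quat_add_def quat_scale_def field_simps)
    finally show ?thesis .
  qed
  ultimately show ?thesis
    unfolding z_def by (metis bij_betw_byWitness subset_UNIV surj_def)
qed

lemma quat_brauer_eq_of_orthogonal_pure:
  assumes "pure_form c d x y = 0"
    and "a = pure_form c d x x" "b = pure_form c d y y" "a \<noteq> 0" "b \<noteq> 0"
  shows "quat_brauer_eq a b c d"
  unfolding quat_brauer_eq_def
proof (intro exI conjI allI)
  let ?f = "quat_frame_map x y (pure_cross c d x y)"
  show "bij ?f" using assms bij_quat_frame_map by blast
  show "?f (quat_mult a b p q) = quat_mult c d (?f p) (?f q)" for p q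
    using assms quat_frame_map_mult by blast
qed (simp_all add: quat_frame_map_add quat_frame_map_scale quat_frame_map_scalar)

lemma quat_brauer_eq_of_sqrt_minus_one:
  fixes u v j :: "'a::field"
  assumes j: "j * j = -1"
    and a: "u * v * (u^2 - 1) * (v^2 - 1) \<noteq> 0" and b: "u * (v^2 - 1) * (v^2 - u^2) \<noteq> 0"
  shows "quat_brauer_eq (u * v * (u^2 - 1) * (v^2 - 1)) (u * (v^2 - 1) * (v^2 - u^2)) u v"
proof -
  define x where "x = ((1 - j) * (1 + u) * v, u * (1 + j) * (1 + v), v * (1 + j*u) - j * (1 - j*u))"
  define y where "y = (j*v - v*v - u + j*u*v, - (1 + j) * u * (1 + v), (1 - j) * (u - v))"
  have "pure_form u v x y = 0"
    and "u * v * (u^2 - 1) * (v^2 - 1) = pure_form u v x x"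
    and "u * (v^2 - 1) * (v^2 - u^2) = pure_form u v y y"
    using j unfolding x_def y_def pure_form.simps power2_eq_square by algebra+
  with a b show ?thesis
    by (blast intro: quat_brauer_eq_of_orthogonal_pure)
qed

lemma Fract_nonzero_by_eval:
  fixes p :: "'a::field poly poly"
  assumes "poly (poly p y) x \<noteq> 0"
  shows "Fract p 1 \<noteq> 0"
  using assms by (auto simp: Zero_fract_def eq_fract)

lemma function_field_factors_nonzero:
  "(var_u :: 'k::field poly poly fract) \<noteq> 0"
  "(var_v :: 'k::field poly poly fract) \<noteq> 0"
  "(var_u :: 'k::field poly poly fract)^2 - 1 \<noteq> 0"
  "(var_v :: 'k::field poly poly fract)^2 - 1 \<noteq> 0"
  "(var_v :: 'k::field poly poly fract)^2 - var_u^2 \<noteq> 0"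
proof -
  let ?U = "[:[:0, 1:]:] :: 'k poly poly" and ?V = "[:0, 1:] :: 'k poly poly"
  \<comment> \<open>poly (poly p y) x evaluates p at v = y and u = x\<close>
  have "var_u = Fract ?U 1" "var_v = Fract ?V 1" "var_u^2 - 1 = Fract (?U^2 - 1) 1"
    "var_v^2 - 1 = Fract (?V^2 - 1) 1" "var_v^2 - var_u^2 = Fract (?V^2 - ?U^2) 1"
    by (simp_all add: var_u_def var_v_def One_fract_def power2_eq_square)
  moreover have "Fract ?U 1 \<noteq> 0" by (rule Fract_nonzero_by_eval[of _ 0 1]) simp
  moreover have "Fract ?V 1 \<noteq> 0" by (rule Fract_nonzero_by_eval[of _ 1 0]) simp
  moreover have "Fract (?U^2 - 1) 1 \<noteq> 0" by (rule Fract_nonzero_by_eval[of _ 0 0]) simp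
  moreover have "Fract (?V^2 - 1) 1 \<noteq> 0" by (rule Fract_nonzero_by_eval[of _ 0 0]) simp
  moreover have "Fract (?V^2 - ?U^2) 1 \<noteq> 0" by (rule Fract_nonzero_by_eval[of _ 0 1]) simp
  ultimately show "var_u \<noteq> (0 :: 'k poly poly fract)" "var_v \<noteq> (0 :: 'k poly poly fract)"
    "var_u^2 - 1 \<noteq> (0 :: 'k poly poly fract)" "var_v^2 - 1 \<noteq> (0 :: 'k poly poly fract)"
    "var_v^2 - var_u^2 \<noteq> (0 :: 'k poly poly fract)"
    by simp_all
qed

lemma sqrt_minus_one_Fract_const:
  fixes i :: "'k::field"
  assumes "i * i = -1"
  shows "Fract [:[:i:]:] 1 * Fract [:[:i:]:] 1 = (-1 :: 'k poly poly fract)"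
proof -
  have "[:[:i:]:] * [:[:i:]:] = (-1 :: 'k poly poly)"
    using assms by (simp add: one_pCons)
  then show ?thesis by (simp add: One_fract_def)
qed

theorem mainTheorem2:
  assumes "(2::'k::field) \<noteq> 0"
    and "\<exists>i::'k. i * i = -1"
  shows "quat_brauer_eq
     ((var_u::'k poly poly fract) * var_v * (var_u^2 - 1) * (var_v^2 - 1))
     (var_u * (var_v^2 - 1) * (var_v^2 - var_u^2))
     var_u var_v"
proof -
  obtain i :: 'k where "i * i = -1" using assms(2) by blast
  then have j: "Fract [:[:i:]:] 1 * Fract [:[:i:]:] 1 = (-1 :: 'k poly poly fract)"
    by (rule sqrt_minus_one_Fract_const)
  show ?thesis
    using function_field_factors_nonzero by (intro quat_brauer_eq_of_sqrt_minus_one[OF j]) simp_all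
qed

end
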